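(* Let $K_1\subset\mathbb C^m$ be a compact set with $A_D(K_1)=\overline{\mathcal O}(K_1)$, let $\omega\in A_D(K_1)$, and let \[ K=\{(z,w)\in\mathbb C^{m+1}: z\in K_1,\ w=\omega(z)\} \] be the graph of $\omega$. Then $A_D(K)=\overline{\mathcal O}(K)$.
   Context: For a compact $K\subset\mathbb C^n$: $\overline{\mathcal O}(K)$ is the closure in $C(K)$ (supremum norm) of restrictions to $K$ of functions holomorphic on some open neighbourhood of $K$; $A_D(K)$ is the set of continuous functions $f:K\to\mathbb C$ such that for every open disc $D\subset\mathbb C$ and every injective holomorphic mapping $\phi:D\to\mathbb C^n$ with $\phi(D)\subset K$, $f\circ\phi$ is holomorphic on $D$. *)

theory Defs
  imports "HOL-Analysis.Analysis"
begin

definition holo_on :: "(complex ^ 'n \<Rightarrow> complex) \<Rightarrow> (complex ^ 'n) set \<Rightarrow> bool" where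
  "holo_on f U \<longleftrightarrow>
     (\<forall>x\<in>U. \<exists>L. (f has_derivative L) (at x) \<and> (\<forall>c v. L (c *s v) = c * L v))"

definition Obar :: "(complex ^ 'n) set \<Rightarrow> (complex ^ 'n \<Rightarrow> complex) set" where
  "Obar K = {f. continuous_on K f \<and>
     (\<forall>e>0. \<exists>U g. open U \<and> K \<subseteq> U \<and> holo_on g U \<and> (\<forall>x\<in>K. norm (f x - g x) < e))}"

definition A_D :: "(complex ^ 'n) set \<Rightarrow> (complex ^ 'n \<Rightarrow> complex) set" where
  "A_D K = {f. continuous_on K f \<and>
     (\<forall>(a::complex) r (\<phi>::complex \<Rightarrow> complex ^ 'n). r > 0 \<longrightarrow>
        inj_on \<phi> (ball a r) \<longrightarrow>
        (\<forall>i. (\<lambda>z. \<phi> z $ i) holomorphic_on ball a r) \<longrightarrow>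
        \<phi> ` ball a r \<subseteq> K \<longrightarrow>
        (f \<circ> \<phi>) holomorphic_on ball a r)}"

text \<open>C^(m+1) is modelled as complex ^ ('m option): coordinate None is the extra
  variable w, coordinates Some i are z.\<close>

definition zpart :: "complex ^ ('m option) \<Rightarrow> complex ^ 'm" where
  "zpart x = (\<chi> i. x $ Some i)"

end

theory Submission
  imports Defs "HOL-Complex_Analysis.Cauchy_Integral_Formula"
begin

text \<open>The projection zpart restricts to a homeomorphism of the graph K of \<omega> onto K1, inverted
  by the section s(z) = (z, \<omega>(z)). Since \<omega> \<in> A_D(K1), the section carries injective holomorphic
  discs in K1 to injective holomorphic discs in K, so f \<in> A_D(K) gives f \<circ> s \<in> A_D(K1) = Obar(K1).
  Holomorphic approximants h of f \<circ> s near K1 then yield the approximants h \<circ> zpart of f near K.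
  The inclusion Obar(K) \<subseteq> A_D(K) holds for every K, since uniform limits of holomorphic
  functions are holomorphic.\<close>

lemma has_derivative_vec_lambdaI:
  fixes f :: "'a::euclidean_space \<Rightarrow> 'b::real_normed_vector ^ 'n"
  assumes "\<And>i. ((\<lambda>x. f x $ i) has_derivative (\<lambda>h. f' h $ i)) F"
  shows "(f has_derivative f') F"
proof -
  have components: "\<And>i. linear (\<lambda>h. f' h $ i)"
    using assms has_derivative_bounded_linear bounded_linear.linear by blast
  have "linear f'"
    using linear_add[OF components] linear_scale[OF components]
    by (intro linearI) (auto simp: vec_eq_iff)
  then have "bounded_linear f'"
    by (simp add: linear_conv_bounded_linear)
  with assms show ?thesis
    unfolding has_derivative_def by (simp add: vec_tendstoI)
qed

lemma holo_on_comp_holomorphic_disc: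
  fixes g :: "complex ^ 'n \<Rightarrow> complex"
  assumes g: "holo_on g U" and \<phi>: "\<And>i. (\<lambda>z. \<phi> z $ i) holomorphic_on S"
    and "open S" and "\<phi> ` S \<subseteq> U"
  shows "(g \<circ> \<phi>) holomorphic_on S"
  unfolding holomorphic_on_open[OF \<open>open S\<close>]
proof
  fix z assume z: "z \<in> S"
  have "\<forall>i. \<exists>d. ((\<lambda>z. \<phi> z $ i) has_field_derivative d) (at z)"
    using \<phi> z holomorphic_on_open[OF \<open>open S\<close>] by blast
  then obtain d where d: "\<And>i. ((\<lambda>z. \<phi> z $ i) has_field_derivative d i) (at z)"
    by metis
  have \<phi>': "(\<phi> has_derivative (\<lambda>h. h *s (\<chi> i. d i))) (at z)"
    using d by (intro has_derivative_vec_lambdaI) (simp add: has_field_derivative_def mult_commute_abs)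
  obtain L where L: "(g has_derivative L) (at (\<phi> z))" "\<And>c v. L (c *s v) = c * L v"
    using g assms(4) z unfolding holo_on_def by blast
  have "(g \<circ> \<phi> has_derivative L \<circ> (\<lambda>h. h *s (\<chi> i. d i))) (at z)"
    by (rule diff_chain_at[OF \<phi>' L(1)])
  moreover have "L \<circ> (\<lambda>h. h *s (\<chi> i. d i)) = (*) (L (\<chi> i. d i))"
    using L(2) by (auto simp: fun_eq_iff mult.commute)
  ultimately show "\<exists>f'. (g \<circ> \<phi> has_field_derivative f') (at z)"
    by (auto simp: has_field_derivative_def)
qed

lemma holo_on_comp_complex_linear:
  fixes P :: "complex ^ 'n \<Rightarrow> complex ^ 'k"
  assumes "holo_on h U" and "bounded_linear P" and "\<And>c v. P (c *s v) = c *s P v"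
  shows "holo_on (h \<circ> P) (P -` U)"
  unfolding holo_on_def
proof
  fix x assume "x \<in> P -` U"
  then obtain L where L: "(h has_derivative L) (at (P x))" "\<forall>c v. L (c *s v) = c * L v"
    using assms(1) unfolding holo_on_def by blast
  have "(h \<circ> P has_derivative L \<circ> P) (at x)"
    by (rule diff_chain_at[OF bounded_linear_imp_has_derivative[OF assms(2)] L(1)])
  moreover have "\<forall>c v. (L \<circ> P) (c *s v) = c * (L \<circ> P) v"
    using L(2) assms(3) by simp
  ultimately show "\<exists>L. (h \<circ> P has_derivative L) (at x) \<and> (\<forall>c v. L (c *s v) = c * L v)"
    by blast
qed

lemma Obar_cong:
  assumes "\<And>x. x \<in> K \<Longrightarrow> f x = g x"
  shows "f \<in> Obar K \<longleftrightarrow> g \<in> Obar K"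
  using assms continuous_on_cong[OF refl assms] by (simp add: Obar_def)

lemma Obar_comp_complex_linear:
  fixes P :: "complex ^ 'n \<Rightarrow> complex ^ 'k"
  assumes g: "g \<in> Obar K1" and P: "bounded_linear P" "\<And>c v. P (c *s v) = c *s P v"
    and "P ` K \<subseteq> K1"
  shows "g \<circ> P \<in> Obar K"
  unfolding Obar_def
proof (intro CollectI conjI allI impI)
  have "continuous_on (P ` K) g"
    using g assms(4) unfolding Obar_def by (blast intro: continuous_on_subset)
  then show "continuous_on K (g \<circ> P)"
    by (rule continuous_on_compose[OF linear_continuous_on[OF P(1)]])
  fix e :: real assume "e > 0"
  then obtain U h where U: "open U" "K1 \<subseteq> U" "holo_on h U" "\<forall>z\<in>K1. norm (g z - h z) < e"
    using g unfolding Obar_def by blast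
  have "open (P -` U)"
    using U(1) linear_continuous_at[OF P(1)] by (rule continuous_open_vimage)
  moreover have "K \<subseteq> P -` U"
    using subset_trans[OF assms(4) U(2)] by (simp add: image_subset_iff_subset_vimage)
  moreover have "\<forall>x\<in>K. norm ((g \<circ> P) x - (h \<circ> P) x) < e"
    using U(4) assms(4) by (simp add: image_subset_iff)
  ultimately show "\<exists>U h. open U \<and> K \<subseteq> U \<and> holo_on h U \<and> (\<forall>x\<in>K. norm ((g \<circ> P) x - h x) < e)"
    using holo_on_comp_complex_linear[OF U(3) P] by blast
qed

lemma Obar_uniform_approximation:
  assumes "f \<in> Obar K"
  obtains U G where "\<And>n. open (U n)" "\<And>n. K \<subseteq> U n" "\<And>n. holo_on (G n) (U n)"
    "uniform_limit K G f sequentially"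
proof -
  have "\<forall>n::nat. \<exists>U g. open U \<and> K \<subseteq> U \<and> holo_on g U \<and>
      (\<forall>x\<in>K. norm (f x - g x) < inverse (real (Suc n)))"
    using assms unfolding Obar_def by auto
  then obtain U G where UG: "\<And>n. open (U n)" "\<And>n. K \<subseteq> U n" "\<And>n. holo_on (G n) (U n)"
    and approx: "\<And>n x. x \<in> K \<Longrightarrow> norm (f x - G n x) < inverse (real (Suc n))"
    by metis
  have "uniform_limit K G f sequentially"
    unfolding uniform_limit_sequentially_iff
  proof (intro allI impI)
    fix e :: real assume "e > 0"
    then obtain N where N: "inverse (real (Suc N)) < e"
      using reals_Archimedean by blast
    have "dist (G n x) (f x) < e" if "N \<le> n" "x \<in> K" for n x
    proof -
      have "dist (G n x) (f x) < inverse (real (Suc n))"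
        using approx[OF \<open>x \<in> K\<close>] by (simp add: dist_norm norm_minus_commute)
      also have "\<dots> \<le> inverse (real (Suc N))"
        using \<open>N \<le> n\<close> by (simp add: le_imp_inverse_le)
      finally show ?thesis using N by linarith
    qed
    then show "\<exists>N. \<forall>n\<ge>N. \<forall>x\<in>K. dist (G n x) (f x) < e" by blast
  qed
  with UG show thesis by (rule that)
qed

lemma Obar_subset_A_D: "Obar K \<subseteq> A_D K"
proof
  fix f assume f: "f \<in> Obar K"
  then obtain U G where UG: "\<And>n. open (U n)" "\<And>n. K \<subseteq> U n" "\<And>n. holo_on (G n) (U n)"
    and lim: "uniform_limit K G f sequentially"
    by (metis Obar_uniform_approximation)
  show "f \<in> A_D K"
    unfolding A_D_def
  proof (intro CollectI conjI allI impI)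
    show "continuous_on K f" using f by (simp add: Obar_def)
    fix a r and \<phi> :: "complex \<Rightarrow> complex ^ 'a"
    assume "\<forall>i. (\<lambda>z. \<phi> z $ i) holomorphic_on ball a r" and \<phi>K: "\<phi> ` ball a r \<subseteq> K"
    then have holo: "(G n \<circ> \<phi>) holomorphic_on ball a r" for n
      using UG(2,3) by (intro holo_on_comp_holomorphic_disc[where U = "U n"]) auto
    have lim_disc: "uniform_limit (ball a r) (\<lambda>n. G n \<circ> \<phi>) (f \<circ> \<phi>) sequentially"
      using uniform_limit_compose'[OF lim, of \<phi> "ball a r"] \<phi>K by (auto simp: o_def)
    show "(f \<circ> \<phi>) holomorphic_on ball a r"
    proof (rule holomorphic_uniform_sequence[OF open_ball holo])
      fix z assume "z \<in> ball a r"
      then obtain d where "d > 0" "cball z d \<subseteq> ball a r"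
        using open_ball open_contains_cball by blast
      with lim_disc show "\<exists>d>0. cball z d \<subseteq> ball a r \<and>
          uniform_limit (cball z d) (\<lambda>n. G n \<circ> \<phi>) (f \<circ> \<phi>) sequentially"
        by (blast intro: uniform_limit_on_subset)
    qed
  qed
qed

definition graph_section :: "(complex ^ 'm \<Rightarrow> complex) \<Rightarrow> complex ^ 'm \<Rightarrow> complex ^ ('m option)"
  where "graph_section \<omega> z = (\<chi> j. case j of None \<Rightarrow> \<omega> z | Some i \<Rightarrow> z $ i)"

lemma zpart_graph_section [simp]: "zpart (graph_section \<omega> z) = z"
  by (simp add: graph_section_def zpart_def vec_eq_iff)

lemma graph_section_None [simp]: "graph_section \<omega> z $ None = \<omega> z"
  by (simp add: graph_section_def)

lemma graph_section_zpart: "x $ None = \<omega> (zpart x) \<Longrightarrow> graph_section \<omega> (zpart x) = x"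
  by (auto simp: graph_section_def zpart_def vec_eq_iff split: option.split)

lemma bounded_linear_zpart: "bounded_linear zpart"
  unfolding linear_conv_bounded_linear[symmetric]
  by (rule linearI) (simp_all add: zpart_def vec_eq_iff)

lemma zpart_scalar_mult: "zpart (c *s v) = c *s zpart v"
  by (simp add: zpart_def vec_eq_iff)

lemma A_D_holomorphic_on_disc:
  assumes "f \<in> A_D K" and "r > 0" and "inj_on \<phi> (ball a r)"
    and "\<forall>i. (\<lambda>z. \<phi> z $ i) holomorphic_on ball a r" and "\<phi> ` ball a r \<subseteq> K"
  shows "(f \<circ> \<phi>) holomorphic_on ball a r"
  using assms by (simp add: A_D_def)

lemma A_D_comp_graph_section:
  fixes K1 :: "(complex ^ 'm) set" and \<omega> :: "complex ^ 'm \<Rightarrow> complex"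
  defines "K \<equiv> {x. zpart x \<in> K1 \<and> x $ None = \<omega> (zpart x)}"
  assumes f: "f \<in> A_D K" and \<omega>: "\<omega> \<in> A_D K1"
  shows "f \<circ> graph_section \<omega> \<in> A_D K1"
  unfolding A_D_def
proof (intro CollectI conjI allI impI)
  have "continuous_on K1 (\<lambda>z. case j of None \<Rightarrow> \<omega> z | Some i \<Rightarrow> z $ i)" for j
    using \<omega> unfolding A_D_def by (cases j) (auto intro: continuous_on_component continuous_on_id)
  then have "continuous_on K1 (graph_section \<omega>)"
    unfolding graph_section_def by (rule continuous_on_vec_lambda)
  moreover have "graph_section \<omega> ` K1 \<subseteq> K"
    by (auto simp: K_def)
  ultimately show "continuous_on K1 (f \<circ> graph_section \<omega>)"
    using f unfolding A_D_def by (blast intro: continuous_on_compose continuous_on_subset)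
  fix a r and \<phi> :: "complex \<Rightarrow> complex ^ 'm"
  assume r: "r > 0" and inj: "inj_on \<phi> (ball a r)"
    and \<phi>: "\<forall>i. (\<lambda>z. \<phi> z $ i) holomorphic_on ball a r" and \<phi>K1: "\<phi> ` ball a r \<subseteq> K1"
  have "(\<omega> \<circ> \<phi>) holomorphic_on ball a r"
    by (rule A_D_holomorphic_on_disc[OF \<omega> r inj \<phi> \<phi>K1])
  with \<phi> have "\<forall>j. (\<lambda>z. (graph_section \<omega> \<circ> \<phi>) z $ j) holomorphic_on ball a r"
    by (intro allI, case_tac j) (simp_all add: graph_section_def o_def)
  moreover have "inj_on (graph_section \<omega> \<circ> \<phi>) (ball a r)"
    using inj by (metis comp_inj_on inj_on_def zpart_graph_section)
  moreover have "(graph_section \<omega> \<circ> \<phi>) ` ball a r \<subseteq> K"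
    using \<phi>K1 by (auto simp: K_def)
  ultimately have "(f \<circ> (graph_section \<omega> \<circ> \<phi>)) holomorphic_on ball a r"
    by (intro A_D_holomorphic_on_disc[OF f r])
  then show "(f \<circ> graph_section \<omega> \<circ> \<phi>) holomorphic_on ball a r"
    by (simp only: comp_assoc)
qed

theorem mainTheorem15:
  fixes K1 :: "(complex ^ 'm) set" and \<omega> :: "complex ^ 'm \<Rightarrow> complex"
  assumes "compact K1"
    and "A_D K1 = Obar K1"
    and "\<omega> \<in> A_D K1"
  shows "A_D {x :: complex ^ ('m option). zpart x \<in> K1 \<and> x $ None = \<omega> (zpart x)}
       = Obar {x :: complex ^ ('m option). zpart x \<in> K1 \<and> x $ None = \<omega> (zpart x)}"
    (is "A_D ?K = Obar ?K")
proof
  show "A_D ?K \<subseteq> Obar ?K"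
  proof
    fix f assume "f \<in> A_D ?K"
    then have "f \<circ> graph_section \<omega> \<in> Obar K1"
      using A_D_comp_graph_section assms(2,3) by blast
    then have "f \<circ> graph_section \<omega> \<circ> zpart \<in> Obar ?K"
      by (rule Obar_comp_complex_linear[OF _ bounded_linear_zpart zpart_scalar_mult]) auto
    then show "f \<in> Obar ?K"
      by (subst Obar_cong[where g = "f \<circ> graph_section \<omega> \<circ> zpart"])
        (simp_all add: graph_section_zpart)
  qed
  show "Obar ?K \<subseteq> A_D ?K" by (rule Obar_subset_A_D)
qed

end
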